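(* The monoid $\mathrm{rps}$ does not satisfy any non-trivial identity.
   Context: Let $\mathcal{A}=\{1<2<3<\cdots\}$. An rPS tableau is a finite (possibly empty) sequence of nonempty bottom-justified columns of boxes filled with elements of $\mathcal{A}$, such that the entries of each column are weakly decreasing from top to bottom and the bottom entries of the columns form a strictly increasing sequence from left to right. Right insertion of a symbol $a$ into an rPS tableau $B$: if $a$ is strictly greater than every entry of the bottom row, append a new column consisting of $a$ at the right end; otherwise, let $z$ be the leftmost bottom-row entry with $z\geq a$ and put $a$ in a new box at the bottom of the column of $z$ (the previous entries of that column move up one box). For $w=w_1\cdots w_k$, $\mathfrak{R}_r(w)$ is obtained by starting with the empty tableau and right-inserting $w_1,\dots,w_k$ in order. The monoid $\mathrm{rps}$ is the quotient of $\mathcal{A}^*$ by the congruence $u\equiv v\iff\mathfrak{R}_r(u)=\mathfrak{R}_r(v)$. An identity is a formal equality $u=v$ of words over a countable alphabet of variables; it is non-trivial if $u\neq v$ as words; a monoid $M$ satisfies it if equality holds under every substitution of elements of $M$ for the variables. *)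

theory Defs
  imports Main
begin

text \<open>Alphabet A = {1 < 2 < 3 < ...}: positive naturals.
  An rPS tableau is a list of columns (left to right); each column is a list of
  its entries listed from the BOTTOM box upwards (so the head is the bottom entry).\<close>

type_synonym rps_tableau = "nat list list"

fun rps_insert :: "nat \<Rightarrow> rps_tableau \<Rightarrow> rps_tableau" where
  "rps_insert a [] = [[a]]"
| "rps_insert a (c # cs) =
     (if a \<le> hd c then (a # c) # cs else c # rps_insert a cs)"

definition rps_tab :: "nat list \<Rightarrow> rps_tableau" where
  "rps_tab w = fold rps_insert w []"

definition rps_equiv :: "nat list \<Rightarrow> nat list \<Rightarrow> bool" where
  "rps_equiv u v \<longleftrightarrow> rps_tab u = rps_tab v"

text \<open>Identities are pairs of words over the countable variable alphabet nat.
  A substitution assigns to each variable an element of rps, represented by a word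
  over A; the value of a word is the class of the concatenation of the images.
  rps satisfies u = v iff for every substitution the two values are equal.\<close>

definition subst_word :: "(nat \<Rightarrow> nat list) \<Rightarrow> nat list \<Rightarrow> nat list" where
  "subst_word \<sigma> u = concat (map \<sigma> u)"

definition rps_satisfies :: "nat list \<Rightarrow> nat list \<Rightarrow> bool" where
  "rps_satisfies u v \<longleftrightarrow>
     (\<forall>\<sigma>. (\<forall>x. set (\<sigma> x) \<subseteq> {1..}) \<longrightarrow> rps_equiv (subst_word \<sigma> u) (subst_word \<sigma> v))"

end

theory Submission
  imports Defs
begin

text \<open>If \<open>u \<noteq> v\<close>, some variable \<open>x\<close> occurs in different positions of \<open>u\<close> and \<open>v\<close>; record
  these positions as Boolean words. Substitute the letter \<open>n + 1\<close> for \<open>x\<close> and the decreasing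
  word \<open>n (n - 1) \<cdots> 1\<close> for every other variable, with \<open>n\<close> large. As long as fewer than \<open>n\<close>
  blocks \<open>n \<cdots> 1\<close> have been read, the tableau is a staircase of columns with bottom entries
  \<open>1, \<dots>, t\<close>, one per block, topped by a tower of the letters \<open>n + 1\<close> read since the last
  block: the next block slides a fresh column \<open>t + 1, \<dots>, n\<close> under the tower and adds a new
  bottom box to every staircase column. Reading off, column by column, the number of letters
  \<open>n + 1\<close> and whether other letters are present recovers the Boolean word, so the
  substituted words for \<open>u\<close> and \<open>v\<close> have different tableaux.\<close>

lemma rps_tab_append: "rps_tab (w @ w') = fold rps_insert w' (rps_tab w)"
  by (simp add: rps_tab_def)

lemma rps_insert_append_left:
  assumes "\<forall>c\<in>set B. hd c < a"
  shows "rps_insert a (B @ T) = B @ rps_insert a T"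
  using assms by (induction B) auto

definition staircase :: "rps_tableau \<Rightarrow> bool" where
  "staircase B \<longleftrightarrow> (\<forall>i<length B. B!i \<noteq> [] \<and> hd (B!i) = Suc i)"

definition tower :: "nat \<Rightarrow> nat \<Rightarrow> rps_tableau" where
  "tower a k = (if k = 0 then [] else [replicate k a])"

definition push_bottom_row :: "rps_tableau \<Rightarrow> rps_tableau" where
  "push_bottom_row B = map (\<lambda>i. Suc i # B!i) [0..<length B]"

lemma staircase_hd_less:
  assumes "staircase B" "length B < a"
  shows "\<forall>c\<in>set B. hd c < a"
proof
  fix c assume "c \<in> set B"
  then obtain i where "i < length B" "c = B!i" by (metis in_set_conv_nth)
  with assms show "hd c < a" by (auto simp: staircase_def)
qed

lemma staircase_snoc:
  "staircase (B @ [c]) \<longleftrightarrow> staircase B \<and> c \<noteq> [] \<and> hd c = Suc (length B)"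
  by (auto simp: staircase_def nth_append less_Suc_eq)

lemma staircase_push_bottom_row: "staircase (push_bottom_row B)"
  by (simp add: staircase_def push_bottom_row_def)

lemma rps_insert_tower: "rps_insert a (tower a k) = tower a (Suc k)"
  by (cases k) (simp_all add: tower_def)

lemma rps_insert_below_tower: "a \<le> b \<Longrightarrow> rps_insert a (tower b k) = [a # replicate k b]"
  by (cases k) (simp_all add: tower_def)

lemma foldr_rps_insert_new_column:
  assumes "k \<le> n" "\<forall>c'\<in>set B. hd c' < k" "c \<noteq> []" "n \<le> hd c"
  shows "foldr rps_insert [k..<n] (B @ [c]) = B @ [[k..<n] @ c]"
  using assms(1)
proof (induction k rule: inc_induct)
  case base
  show ?case by simp
next
  case (step m)
  have "hd ([Suc m..<n] @ c) \<ge> m"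
    using step.hyps assms(4) by (cases "Suc m < n") (simp_all add: upt_conv_Cons)
  moreover have "\<forall>c'\<in>set B. hd c' < m" using assms(2) step.hyps by force
  ultimately show ?case
    using step.hyps step.IH by (simp add: upt_conv_Cons rps_insert_append_left)
qed

lemma rps_insert_staircase_column:
  assumes "staircase B" "j < length B"
  shows "rps_insert (Suc j) (B @ R) = B[j := Suc j # B!j] @ R"
proof -
  have prefix: "\<forall>c\<in>set (take j B). hd c < Suc j"
    using staircase_hd_less[of "take j B" "Suc j"] assms
    by (simp add: staircase_def min_def)
  have column: "Suc j \<le> hd (B!j)" using assms by (simp add: staircase_def)
  have "rps_insert (Suc j) (B @ R) = rps_insert (Suc j) (take j B @ B!j # drop (Suc j) B @ R)"
    using assms(2) id_take_nth_drop[of j B] by (metis append.assoc append_Cons)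
  also have "\<dots> = take j B @ (Suc j # B!j) # drop (Suc j) B @ R"
    using column by (simp add: rps_insert_append_left[OF prefix])
  also have "\<dots> = B[j := Suc j # B!j] @ R"
    using assms(2) upd_conv_take_nth_drop[of j B] by simp
  finally show ?thesis .
qed

lemma foldr_rps_insert_staircase:
  assumes "staircase B" "j \<le> length B"
  shows "foldr rps_insert [1..<Suc j] (B @ R) = map (\<lambda>i. Suc i # B!i) [0..<j] @ drop j B @ R"
  using assms
proof (induction j arbitrary: B)
  case 0
  then show ?case by simp
next
  case (Suc j)
  define B' where "B' = B[j := Suc j # B!j]"
  have B': "B' = take j B @ (Suc j # B!j) # drop (Suc j) B"
    using Suc.prems upd_conv_take_nth_drop[of j B] by (simp add: B'_def)
  have "staircase B'"
    using Suc.prems by (auto simp: B'_def staircase_def nth_list_update)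
  then have "foldr rps_insert [1..<Suc j] (B' @ R) = map (\<lambda>i. Suc i # B'!i) [0..<j] @ drop j B' @ R"
    using Suc by (simp add: B'_def)
  moreover have "rps_insert (Suc j) (B @ R) = B' @ R"
    using rps_insert_staircase_column Suc.prems by (simp add: B'_def)
  ultimately show ?case
    using B' Suc.prems by (simp add: B'_def nth_append min_def)
qed

lemma foldr_rps_insert_block:
  assumes "staircase B" "length B < n"
  shows "foldr rps_insert [1..<Suc n] (B @ tower (Suc n) k)
           = push_bottom_row B @ [[Suc (length B)..<Suc n] @ replicate k (Suc n)]"
proof -
  let ?t = "length B"
  have split: "[1..<Suc n] = [1..<Suc ?t] @ [Suc ?t..<n] @ [n]"
    using assms(2) upt_add_eq_append[of 1 "Suc ?t" "n - Suc ?t"] by simp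
  have top: "[Suc ?t..<n] @ [n] = [Suc ?t..<Suc n]"
    using assms(2) by simp
  have "foldr rps_insert [1..<Suc n] (B @ tower (Suc n) k)
          = foldr rps_insert [1..<Suc ?t]
              (foldr rps_insert [Suc ?t..<n] (rps_insert n (B @ tower (Suc n) k)))"
    by (simp only: split foldr_append foldr.simps o_apply id_apply)
  also have "rps_insert n (B @ tower (Suc n) k) = B @ [n # replicate k (Suc n)]"
    using assms by (simp add: rps_insert_append_left staircase_hd_less rps_insert_below_tower)
  also have "foldr rps_insert [Suc ?t..<n] (B @ [n # replicate k (Suc n)])
               = B @ [[Suc ?t..<n] @ n # replicate k (Suc n)]"
    using assms by (intro foldr_rps_insert_new_column) (auto dest: staircase_hd_less)
  also have "foldr rps_insert [1..<Suc ?t] \<dots>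
               = push_bottom_row B @ [[Suc ?t..<n] @ n # replicate k (Suc n)]"
    using foldr_rps_insert_staircase[OF assms(1), of ?t] by (simp add: push_bottom_row_def)
  finally show ?thesis
    using top by (metis append.assoc append_Cons append_Nil)
qed

definition column_code :: "nat \<Rightarrow> nat list \<Rightarrow> bool list" where
  "column_code n c =
     replicate (count_list c (Suc n)) True @ (if set c \<subseteq> {Suc n} then [] else [False])"

definition rps_decode :: "nat \<Rightarrow> rps_tableau \<Rightarrow> bool list" where
  "rps_decode n T = concat (map (column_code n) T)"

lemma rps_decode_append: "rps_decode n (T @ T') = rps_decode n T @ rps_decode n T'"
  by (simp add: rps_decode_def)

lemma count_list_replicate_same: "count_list (replicate k a) a = k"
  by (induction k) auto

lemma rps_decode_tower: "rps_decode n (tower (Suc n) k) = replicate k True"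
  by (simp add: rps_decode_def tower_def column_code_def count_list_replicate_same)

lemma column_code_new_column:
  assumes "t < n"
  shows "column_code n ([Suc t..<Suc n] @ replicate k (Suc n)) = replicate k True @ [False]"
proof -
  have "Suc t \<in> set ([Suc t..<Suc n] @ replicate k (Suc n))" using assms by auto
  then have "\<not> set ([Suc t..<Suc n] @ replicate k (Suc n)) \<subseteq> {Suc n}" using assms by auto
  then show ?thesis
    by (simp add: column_code_def count_list_replicate_same)
qed

lemma rps_decode_push_bottom_row:
  assumes "staircase B" "length B \<le> n"
  shows "rps_decode n (push_bottom_row B) = rps_decode n B"
proof -
  have "column_code n (Suc i # B!i) = column_code n (B!i)" if "i < length B" for i
  proof -
    have "B!i \<noteq> []" "hd (B!i) = Suc i" "Suc i \<noteq> Suc n"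
      using assms that by (auto simp: staircase_def)
    then have "\<not> set (B!i) \<subseteq> {Suc n}" by (metis hd_in_set singletonD subsetD)
    then show ?thesis using \<open>Suc i \<noteq> Suc n\<close> by (simp add: column_code_def)
  qed
  then have "map (column_code n) (push_bottom_row B) = map (column_code n) B"
    by (intro nth_equalityI) (simp_all add: push_bottom_row_def)
  then show ?thesis by (simp add: rps_decode_def)
qed

lemma staircase_block:
  assumes "length B < n"
  shows "staircase (push_bottom_row B @ [[Suc (length B)..<Suc n] @ replicate k (Suc n)])"
  using staircase_push_bottom_row[of B] assms
  by (simp add: staircase_snoc push_bottom_row_def upt_conv_Cons del: upt_Suc)

lemma rps_decode_block:
  assumes "staircase B" "length B < n"
  shows "rps_decode n (push_bottom_row B @ [[Suc (length B)..<Suc n] @ replicate k (Suc n)])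
           = rps_decode n (B @ tower (Suc n) k) @ [False]"
proof -
  have "rps_decode n (push_bottom_row B @ [[Suc (length B)..<Suc n] @ replicate k (Suc n)])
          = rps_decode n B @ column_code n ([Suc (length B)..<Suc n] @ replicate k (Suc n))"
    using assms by (simp only: rps_decode_append rps_decode_push_bottom_row less_imp_le)
                   (simp add: rps_decode_def)
  also have "\<dots> = rps_decode n B @ replicate k True @ [False]"
    by (simp only: column_code_new_column[OF assms(2)])
  finally show ?thesis by (simp add: rps_decode_append rps_decode_tower)
qed

definition rps_encode :: "nat \<Rightarrow> bool list \<Rightarrow> nat list" where
  "rps_encode n p = concat (map (\<lambda>b. if b then [Suc n] else rev [1..<Suc n]) p)"

lemma rps_tab_encode_shape:
  assumes "length p \<le> n"
  shows "\<exists>B k. rps_tab (rps_encode n p) = B @ tower (Suc n) k \<and> staircase B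
           \<and> length B = length (filter Not p) \<and> rps_decode n (B @ tower (Suc n) k) = p"
  using assms
proof (induction p rule: rev_induct)
  case Nil
  show ?case
    by (rule exI[of _ "[]"], rule exI[of _ 0])
       (simp add: rps_encode_def rps_tab_def tower_def staircase_def rps_decode_def)
next
  case (snoc b p)
  then obtain B k where IH: "rps_tab (rps_encode n p) = B @ tower (Suc n) k" "staircase B"
      "length B = length (filter Not p)" "rps_decode n (B @ tower (Suc n) k) = p"
    by auto
  have short: "length B < n"
    using IH(3) snoc.prems length_filter_le[of Not p] by (simp del: length_filter_le)
  have tab: "rps_tab (rps_encode n (p @ [b]))
               = fold rps_insert (if b then [Suc n] else rev [1..<Suc n]) (B @ tower (Suc n) k)"
    using IH(1) by (simp add: rps_encode_def rps_tab_append)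
  show ?case
  proof (cases b)
    case True
    have "rps_tab (rps_encode n (p @ [b])) = B @ tower (Suc n) (Suc k)"
      using tab True short IH(2)
      by (simp add: rps_insert_append_left staircase_hd_less rps_insert_tower)
    moreover have "rps_decode n (B @ tower (Suc n) (Suc k))
                     = rps_decode n (B @ tower (Suc n) k) @ [b]"
      using True by (simp add: rps_decode_append rps_decode_tower replicate_append_same)
    ultimately show ?thesis using IH True by (intro exI[of _ B] exI[of _ "Suc k"]) simp
  next
    case False
    define B' where "B' = push_bottom_row B @ [[Suc (length B)..<Suc n] @ replicate k (Suc n)]"
    have "fold rps_insert (rev [1..<Suc n]) (B @ tower (Suc n) k) = B' @ tower (Suc n) 0"
      using foldr_rps_insert_block[OF IH(2) short]
      by (simp only: foldr_conv_fold[symmetric]) (simp add: B'_def tower_def)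
    then have "rps_tab (rps_encode n (p @ [b])) = B' @ tower (Suc n) 0"
      using tab False by simp
    moreover have "staircase B'" "rps_decode n B' = rps_decode n (B @ tower (Suc n) k) @ [b]"
      using staircase_block[OF short] rps_decode_block[OF IH(2) short] False
      by (simp_all add: B'_def)
    ultimately show ?thesis
      using IH(3,4) False
      by (intro exI[of _ B'] exI[of _ 0]) (simp add: B'_def push_bottom_row_def tower_def)
  qed
qed

lemma rps_decode_rps_tab_encode: "length p \<le> n \<Longrightarrow> rps_decode n (rps_tab (rps_encode n p)) = p"
  using rps_tab_encode_shape by force

lemma exists_separating_variable:
  fixes u v :: "'a list"
  assumes "u \<noteq> v"
  obtains x where "map (\<lambda>y. y = x) u \<noteq> map (\<lambda>y. y = x) v"
proof (cases "length u = length v")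
  case True
  then obtain i where "i < length u" "u!i \<noteq> v!i"
    using assms nth_equalityI by blast
  then have "map (\<lambda>y. y = u!i) u \<noteq> map (\<lambda>y. y = u!i) v"
    using True by (metis (mono_tags) nth_map)
  then show ?thesis using that by blast
next
  case False
  then show ?thesis using that by (metis length_map)
qed

theorem theorem4p9:
  fixes u v :: "nat list"
  assumes "u \<noteq> v"
  shows "\<not> rps_satisfies u v"
proof
  assume sat: "rps_satisfies u v"
  obtain x where x: "map (\<lambda>y. y = x) u \<noteq> map (\<lambda>y. y = x) v"
    using assms by (rule exists_separating_variable)
  define n where "n = length u + length v"
  define \<sigma> where "\<sigma> = (\<lambda>y. if y = x then [Suc n] else rev [1..<Suc n])"
  have "\<forall>y. set (\<sigma> y) \<subseteq> {1..}" by (auto simp: \<sigma>_def)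
  moreover have encode: "subst_word \<sigma> w = rps_encode n (map (\<lambda>y. y = x) w)" for w
    by (simp add: subst_word_def rps_encode_def \<sigma>_def comp_def)
  ultimately have "rps_tab (rps_encode n (map (\<lambda>y. y = x) u))
                     = rps_tab (rps_encode n (map (\<lambda>y. y = x) v))"
    using sat by (simp add: rps_satisfies_def rps_equiv_def encode[symmetric])
  then have "map (\<lambda>y. y = x) u = map (\<lambda>y. y = x) v"
    using rps_decode_rps_tab_encode[of "map (\<lambda>y. y = x) u" n]
          rps_decode_rps_tab_encode[of "map (\<lambda>y. y = x) v" n]
    by (simp add: n_def)
  with x show False ..
qed

end
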